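(* Let $M\ge1$ be an integer, $\lambda>1$, $0\le\varepsilon<\lambda-1$. Let $1\ne u\in F_N$ be such that the orbit ${\rm Out}(F_N)[u]$ contains an $(M,\lambda,\varepsilon)$-minimal conjugacy class. Then every $[u']\in\mathcal M([u])$ is $(M,\lambda,\varepsilon)$-minimal.
   Context: $F_N=F(A)$ is free of rank $N\ge2$ with free basis $A$; $\|g\|_A$ is the cyclically reduced length of $g$ (depends only on $[g]$); ${\rm Out}(F_N)$ acts on conjugacy classes. A class $[w]$ is ${\rm Out}(F_N)$-minimal if $\|w\|_A\le\|\varphi(w)\|_A$ for all $\varphi\in{\rm Out}(F_N)$; $\mathcal M([w])$ is the set of ${\rm Out}(F_N)$-minimal classes in ${\rm Out}(F_N)[w]$. For an integer $M\ge1$, $\lambda>1$, $0\le\varepsilon<\lambda-1$: a finite set $S$ of conjugacy classes of nontrivial elements is $(M,\lambda,\varepsilon)$-minimizing if (1) $\#S\le M$; (2) all elements of $S$ lie in one ${\rm Out}(F_N)$-orbit; (3) for all $[u],[u']\in S$, $1-\varepsilon\le\|u'\|_A/\|u\|_A\le1+\varepsilon$; (4) for every $[u]\in S$ and every $\varphi\in{\rm Out}(F_N)$ with $\varphi([u])\notin S$, $\|\varphi(u)\|_A/\|u\|_A\ge\lambda$. A nontrivial class $[u]$ is $(M,\lambda,\varepsilon)$-minimal if it belongs to some $(M,\lambda,\varepsilon)$-minimizing set. *)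

theory Defs
  imports Complex_Main
begin

text \<open>A letter (i, False) stands for the basis element a_i, (i, True) for its inverse.
  Elements of F_N are the freely reduced words over the letters with i < N.\<close>

type_synonym letter = "nat \<times> bool"
type_synonym word = "letter list"

definition inv_letter :: "letter \<Rightarrow> letter" where
  "inv_letter x = (fst x, \<not> snd x)"

fun reduced :: "word \<Rightarrow> bool" where
  "reduced [] = True"
| "reduced [x] = True"
| "reduced (x # y # ys) = (y \<noteq> inv_letter x \<and> reduced (y # ys))"

fun reduce :: "word \<Rightarrow> word" where
  "reduce [] = []"
| "reduce (x # xs) =
     (case reduce xs of
        [] \<Rightarrow> [x]
      | y # ys \<Rightarrow> (if y = inv_letter x then ys else x # y # ys))"

definition FN :: "nat \<Rightarrow> word set" where
  "FN N = {w. reduced w \<and> (\<forall>x \<in> set w. fst x < N)}"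

definition fmult :: "word \<Rightarrow> word \<Rightarrow> word" where
  "fmult v w = reduce (v @ w)"

definition finv :: "word \<Rightarrow> word" where
  "finv w = rev (map inv_letter w)"

function cyc_red :: "word \<Rightarrow> word" where
  "cyc_red w = (if 2 \<le> length w \<and> hd w = inv_letter (last w)
                then cyc_red (butlast (tl w)) else w)"
  by auto
termination by (relation "measure length") auto

definition cyc_len :: "word \<Rightarrow> nat" where
  "cyc_len w = length (cyc_red w)"

definition hom_ext :: "(nat \<Rightarrow> word) \<Rightarrow> word \<Rightarrow> word" where
  "hom_ext f w = reduce (concat (map (\<lambda>x. if snd x then finv (f (fst x)) else f (fst x)) w))"

definition Aut :: "nat \<Rightarrow> (word \<Rightarrow> word) set" where
  "Aut N = {\<phi>. \<exists>f. (\<forall>i<N. f i \<in> FN N) \<and> \<phi> = hom_ext f \<and> bij_betw \<phi> (FN N) (FN N)}"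

definition conjcl :: "nat \<Rightarrow> word \<Rightarrow> word set" where
  "conjcl N u = {fmult (fmult g u) (finv g) | g. g \<in> FN N}"

definition conj_classes :: "nat \<Rightarrow> word set set" where
  "conj_classes N = {conjcl N u | u. u \<in> FN N}"

definition nontriv_classes :: "nat \<Rightarrow> word set set" where
  "nontriv_classes N = {conjcl N u | u. u \<in> FN N \<and> u \<noteq> []}"

text \<open>Action of an automorphism on a conjugacy class: phi([u]) = [phi(u)] = phi ` [u].
  Inner automorphisms act trivially, so this is the action of Out(F_N).\<close>
definition act :: "(word \<Rightarrow> word) \<Rightarrow> word set \<Rightarrow> word set" where
  "act \<phi> C = \<phi> ` C"

definition orbit :: "nat \<Rightarrow> word set \<Rightarrow> word set set" where
  "orbit N C = {act \<phi> C | \<phi>. \<phi> \<in> Aut N}"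

text \<open>||[g]||_A, computed from any representative (it does not depend on the choice).\<close>
definition cl_len :: "word set \<Rightarrow> nat" where
  "cl_len C = cyc_len (SOME u. u \<in> C)"

definition out_minimal :: "nat \<Rightarrow> word set \<Rightarrow> bool" where
  "out_minimal N C \<longleftrightarrow> (\<forall>\<phi> \<in> Aut N. cl_len C \<le> cl_len (act \<phi> C))"

definition min_set :: "nat \<Rightarrow> word set \<Rightarrow> word set set" where
  "min_set N C = {C' \<in> orbit N C. out_minimal N C'}"

definition minimizing :: "nat \<Rightarrow> nat \<Rightarrow> real \<Rightarrow> real \<Rightarrow> word set set \<Rightarrow> bool" where
  "minimizing N M lam eps S \<longleftrightarrow>
     S \<subseteq> nontriv_classes N \<and> finite S \<and> card S \<le> M \<and>
     (\<forall>C \<in> S. \<forall>C' \<in> S. C' \<in> orbit N C) \<and>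
     (\<forall>C \<in> S. \<forall>C' \<in> S. 1 - eps \<le> real (cl_len C') / real (cl_len C) \<and>
                          real (cl_len C') / real (cl_len C) \<le> 1 + eps) \<and>
     (\<forall>C \<in> S. \<forall>\<phi> \<in> Aut N. act \<phi> C \<notin> S \<longrightarrow>
                          real (cl_len (act \<phi> C)) / real (cl_len C) \<ge> lam)"

definition is_minimal :: "nat \<Rightarrow> nat \<Rightarrow> real \<Rightarrow> real \<Rightarrow> word set \<Rightarrow> bool" where
  "is_minimal N M lam eps C \<longleftrightarrow> C \<in> nontriv_classes N \<and> (\<exists>S. minimizing N M lam eps S \<and> C \<in> S)"

end

theory Submission
  imports Defs
begin

text \<open>If \<open>C\<close> lies in an \<open>(M,\<lambda>,\<epsilon>)\<close>-minimizing set \<open>S\<close>, every class of the orbit of \<open>C\<close>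
  outside \<open>S\<close> is at least \<open>\<lambda> > 1\<close> times longer than \<open>C\<close>. An \<open>Out(F_N)\<close>-minimal class \<open>C'\<close>
  of the same orbit is no longer than \<open>C\<close>, so it must lie in \<open>S\<close>. The only real work is that
  automorphisms, given as substitution endomorphisms that are bijective on \<open>F_N\<close>, are closed under
  composition and inversion, so that any two classes of an orbit are related by an automorphism.\<close>

fun cancel :: "letter \<Rightarrow> word \<Rightarrow> word" where
  "cancel x [] = [x]"
| "cancel x (y # ys) = (if y = inv_letter x then ys else x # y # ys)"

lemma reduce_Cons_cancel: "reduce (x # xs) = cancel x (reduce xs)"
  by (cases "reduce xs") auto

lemma inv_letter_inv_letter [simp]: "inv_letter (inv_letter x) = x"
  by (simp add: inv_letter_def)

lemma fst_inv_letter [simp]: "fst (inv_letter x) = fst x"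
  by (simp add: inv_letter_def)

lemma reduced_Cons: "reduced (x # w) \<longleftrightarrow> reduced w \<and> (w \<noteq> [] \<longrightarrow> hd w \<noteq> inv_letter x)"
  by (cases w) auto

lemma reduced_cancel: "reduced w \<Longrightarrow> reduced (cancel x w)"
  by (cases w) (auto simp: reduced_Cons)

lemma reduced_reduce: "reduced (reduce w)"
  by (induction w) (simp, simp add: reduce_Cons_cancel reduced_cancel del: reduce.simps)

lemma reduce_reduced: "reduced w \<Longrightarrow> reduce w = w"
proof (induction w)
  case (Cons x w)
  then have "reduce w = w" and "w \<noteq> [] \<longrightarrow> hd w \<noteq> inv_letter x"
    by (simp_all add: reduced_Cons)
  then show ?case
    by (cases w) (simp_all add: reduce_Cons_cancel del: reduce.simps)
qed simp

lemma reduce_reduce [simp]: "reduce (reduce w) = reduce w"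
  by (rule reduce_reduced[OF reduced_reduce])

lemma cancel_cancel_inv: "reduced w \<Longrightarrow> cancel x (cancel (inv_letter x) w) = w"
  by (cases w rule: reduced.cases) auto

lemma reduce_append_reduce_right: "reduce (xs @ ys) = reduce (xs @ reduce ys)"
  by (induction xs) (auto simp: reduce_Cons_cancel simp del: reduce.simps)

lemma reduce_append_reduce_left: "reduce (xs @ ys) = reduce (reduce xs @ ys)"
proof (induction xs)
  case (Cons a x)
  have IH: "reduce ((a # x) @ ys) = cancel a (reduce (reduce x @ ys))"
    using Cons by (simp add: reduce_Cons_cancel del: reduce.simps)
  show ?case
  proof (cases "reduce x")
    case (Cons y rs)
    show ?thesis
    proof (cases "y = inv_letter a")
      case True
      have "cancel a (reduce (inv_letter a # rs @ ys)) = reduce (rs @ ys)"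
        by (simp add: reduce_Cons_cancel cancel_cancel_inv reduced_reduce del: reduce.simps)
      then show ?thesis using IH Cons True by (simp add: reduce_Cons_cancel del: reduce.simps)
    qed (use IH Cons in \<open>simp add: reduce_Cons_cancel del: reduce.simps\<close>)
  qed (use IH in \<open>simp add: reduce_Cons_cancel del: reduce.simps\<close>)
qed simp

lemma set_reduce: "set (reduce w) \<subseteq> set w"
proof (induction w)
  case (Cons a w)
  have "set (cancel a (reduce w)) \<subseteq> insert a (set (reduce w))"
    by (cases "reduce w") auto
  then show ?case using Cons by (auto simp: reduce_Cons_cancel simp del: reduce.simps)
qed simp

lemma reduce_in_FN: "\<forall>x \<in> set w. fst x < N \<Longrightarrow> reduce w \<in> FN N"
  using set_reduce[of w] by (auto simp: FN_def reduced_reduce)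

lemma finv_Nil [simp]: "finv [] = []"
  by (simp add: finv_def)

lemma finv_Cons: "finv (x # xs) = finv xs @ [inv_letter x]"
  by (simp add: finv_def)

lemma finv_finv [simp]: "finv (finv w) = w"
  by (simp add: finv_def rev_map comp_def)

lemma fst_set_finv [simp]: "fst ` set (finv w) = fst ` set w"
  by (force simp: finv_def)

lemma reduce_append_finv: "reduce (w @ finv w) = []"
proof (induction w)
  case (Cons a w)
  have "reduce ((a # w) @ finv (a # w)) = cancel a (reduce ((w @ finv w) @ [inv_letter a]))"
    by (simp add: finv_Cons reduce_Cons_cancel del: reduce.simps)
  also have "reduce ((w @ finv w) @ [inv_letter a]) = reduce (reduce (w @ finv w) @ [inv_letter a])"
    by (rule reduce_append_reduce_left)
  finally show ?case using Cons by (simp add: inv_letter_def)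
qed simp

lemma reduce_finv_append: "reduce (finv w @ w) = []"
  using reduce_append_finv[of "finv w"] by simp

lemma conjcl_subset_FN:
  assumes "u \<in> FN N"
  shows "conjcl N u \<subseteq> FN N"
proof
  fix x assume "x \<in> conjcl N u"
  then obtain g where x: "x = fmult (fmult g u) (finv g)" and "g \<in> FN N"
    by (auto simp: conjcl_def)
  then have g: "fst ` set g \<subseteq> {..<N}" and u: "fst ` set u \<subseteq> {..<N}"
    using assms by (auto simp: FN_def)
  have "fst ` set (reduce (g @ u) @ finv g) \<subseteq> fst ` set (g @ u) \<union> fst ` set (finv g)"
    using set_reduce[of "g @ u"] by (auto simp del: fst_set_finv)
  also have "\<dots> \<subseteq> {..<N}"
    using g u by (simp add: image_Un)
  finally have "\<forall>y \<in> set (reduce (g @ u) @ finv g). fst y < N"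
    by auto
  then show "x \<in> FN N" unfolding x fmult_def by (rule reduce_in_FN)
qed

definition letter_image :: "(nat \<Rightarrow> word) \<Rightarrow> letter \<Rightarrow> word" where
  "letter_image f x = (if snd x then finv (f (fst x)) else f (fst x))"

lemma hom_ext_letter_image: "hom_ext f w = reduce (concat (map (letter_image f) w))"
  by (simp add: hom_ext_def letter_image_def[abs_def])

lemma letter_image_inv_letter: "letter_image f (inv_letter x) = finv (letter_image f x)"
  by (simp add: letter_image_def inv_letter_def)

lemma hom_ext_Nil [simp]: "hom_ext f [] = []"
  by (simp add: hom_ext_letter_image)

lemma hom_ext_Cons: "hom_ext f (x # xs) = reduce (letter_image f x @ hom_ext f xs)"
  unfolding hom_ext_letter_image
  by (simp only: list.map concat.simps) (rule reduce_append_reduce_right)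

lemma hom_ext_append: "hom_ext f (xs @ ys) = reduce (hom_ext f xs @ hom_ext f ys)"
  unfolding hom_ext_letter_image map_append concat_append
  by (subst reduce_append_reduce_left, subst reduce_append_reduce_right) (rule refl)

lemma reduced_hom_ext: "reduced (hom_ext f w)"
  by (simp add: hom_ext_letter_image reduced_reduce)

lemma hom_ext_reduce: "hom_ext f (reduce w) = hom_ext f w"
proof (induction w)
  case (Cons a w)
  have IH: "hom_ext f (a # w) = reduce (letter_image f a @ hom_ext f (reduce w))"
    using Cons by (simp add: hom_ext_Cons)
  show ?case
  proof (cases "reduce w")
    case (Cons y ys)
    show ?thesis
    proof (cases "y = inv_letter a")
      case True
      let ?a = "letter_image f a"
      \<comment> \<open>the images of the cancelling letters \<open>a\<close> and \<open>a\<inverse>\<close> cancel as well\<close>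
      have "reduce (?a @ hom_ext f (y # ys)) = reduce (?a @ reduce (finv ?a @ hom_ext f ys))"
        using True by (simp add: hom_ext_Cons letter_image_inv_letter)
      also have "\<dots> = reduce (reduce (?a @ finv ?a) @ hom_ext f ys)"
        by (simp only: append_assoc reduce_append_reduce_right[symmetric]
            reduce_append_reduce_left[symmetric])
      also have "\<dots> = hom_ext f ys"
        by (simp add: reduce_append_finv reduce_reduced reduced_hom_ext)
      finally show ?thesis using IH Cons True by (simp add: reduce_Cons_cancel del: reduce.simps)
    qed (use IH Cons in \<open>simp add: reduce_Cons_cancel hom_ext_Cons del: reduce.simps\<close>)
  qed (use IH in \<open>simp add: hom_ext_Cons reduce_Cons_cancel del: reduce.simps\<close>)
qed simp

lemma hom_ext_finv: "hom_ext f (finv v) = reduce (finv (hom_ext f v))"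
proof -
  let ?x = "hom_ext f v" and ?y = "hom_ext f (finv v)"
  have xy: "reduce (?x @ ?y) = []"
    using hom_ext_append[of f v "finv v"] hom_ext_reduce[of f "v @ finv v"]
    by (simp add: reduce_append_finv)
  have "?y = reduce (reduce (finv ?x @ ?x) @ ?y)"
    by (simp add: reduce_finv_append reduce_reduced reduced_hom_ext)
  also have "\<dots> = reduce (finv ?x @ reduce (?x @ ?y))"
    by (simp only: append_assoc reduce_append_reduce_right[symmetric]
        reduce_append_reduce_left[symmetric])
  finally show ?thesis using xy by simp
qed

lemma hom_ext_hom_ext: "hom_ext f (hom_ext g w) = hom_ext (\<lambda>i. hom_ext f (g i)) w"
proof (induction w)
  case (Cons a w)
  have "hom_ext f (hom_ext g (a # w)) = hom_ext f (letter_image g a @ hom_ext g w)"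
    by (simp add: hom_ext_Cons hom_ext_reduce)
  also have "\<dots> = reduce (hom_ext f (letter_image g a) @ hom_ext (\<lambda>i. hom_ext f (g i)) w)"
    using Cons by (simp add: hom_ext_append)
  also have "\<dots> = reduce (letter_image (\<lambda>i. hom_ext f (g i)) a @ hom_ext (\<lambda>i. hom_ext f (g i)) w)"
    by (cases "snd a")
       (simp_all add: letter_image_def hom_ext_finv reduce_append_reduce_left[symmetric])
  finally show ?case by (simp add: hom_ext_Cons)
qed simp

lemma hom_ext_cong:
  assumes "\<And>x. x \<in> set w \<Longrightarrow> f (fst x) = g (fst x)"
  shows "hom_ext f w = hom_ext g w"
proof -
  have "map (letter_image f) w = map (letter_image g) w"
    using assms by (auto simp: letter_image_def)
  then show ?thesis by (simp only: hom_ext_letter_image)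
qed

lemma hom_ext_basis: "hom_ext (\<lambda>i. [(i, False)]) w = reduce w"
proof -
  have "concat (map (letter_image (\<lambda>i. [(i, False)])) w) = w"
    by (induction w) (auto simp: letter_image_def finv_def inv_letter_def)
  then show ?thesis by (simp add: hom_ext_letter_image)
qed

lemma hom_ext_in_FN:
  assumes "\<forall>i<N. f i \<in> FN N" and "w \<in> FN N"
  shows "hom_ext f w \<in> FN N"
proof -
  have "\<forall>x \<in> set (concat (map (letter_image f) w)). fst x < N"
  proof
    fix x assume "x \<in> set (concat (map (letter_image f) w))"
    then obtain a where a: "a \<in> set w" "x \<in> set (letter_image f a)" by auto
    then have "f (fst a) \<in> FN N" using assms by (auto simp: FN_def)
    moreover have "fst x \<in> fst ` set (letter_image f a)" using a(2) by blast
    moreover have "fst ` set (letter_image f a) = fst ` set (f (fst a))"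
      by (simp add: letter_image_def)
    ultimately show "fst x < N" by (auto simp: FN_def)
  qed
  then show ?thesis unfolding hom_ext_letter_image by (rule reduce_in_FN)
qed

lemma comp_in_Aut:
  assumes "\<phi> \<in> Aut N" and "\<psi> \<in> Aut N"
  shows "\<phi> \<circ> \<psi> \<in> Aut N"
proof -
  obtain f where f: "\<phi> = hom_ext f" and bij_\<phi>: "bij_betw \<phi> (FN N) (FN N)"
    using assms(1) unfolding Aut_def by blast
  obtain g where g: "\<forall>i<N. g i \<in> FN N" "\<psi> = hom_ext g" and bij_\<psi>: "bij_betw \<psi> (FN N) (FN N)"
    using assms(2) unfolding Aut_def by blast
  have comp: "\<phi> \<circ> \<psi> = hom_ext (\<lambda>i. \<phi> (g i))"
    unfolding f g(2) by (rule ext) (simp only: comp_apply hom_ext_hom_ext)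
  have images: "\<forall>i<N. \<phi> (g i) \<in> FN N"
    using bij_\<phi> g(1) by (simp add: bij_betwE)
  show ?thesis
    unfolding Aut_def mem_Collect_eq
    by (intro exI[of _ "\<lambda>i. \<phi> (g i)"] conjI images comp bij_betw_trans[OF bij_\<psi> bij_\<phi>])
qed

text \<open>The inverse of a bijection \<open>\<phi> = hom_ext f\<close> is again a substitution endomorphism: the one
  sending each generator \<open>a\<^sub>i\<close> to its preimage under \<open>\<phi>\<close>.\<close>

lemma Aut_left_inverse:
  assumes "\<phi> \<in> Aut N"
  shows "\<exists>\<psi> \<in> Aut N. \<forall>w \<in> FN N. \<psi> (\<phi> w) = w"
proof -
  obtain f where f: "\<phi> = hom_ext f" and bij: "bij_betw \<phi> (FN N) (FN N)"
    using assms unfolding Aut_def by blast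
  then have inj: "inj_on \<phi> (FN N)" by (simp add: bij_betw_def)
  define g where "g i = inv_into (FN N) \<phi> [(i, False)]" for i
  have generator: "i < N \<Longrightarrow> [(i, False)] \<in> FN N" for i
    by (simp add: FN_def)
  have g_in_FN: "\<forall>i<N. g i \<in> FN N"
    using generator bij unfolding g_def by (metis bij_betw_def inv_into_into)
  have \<phi>_g: "i < N \<Longrightarrow> \<phi> (g i) = [(i, False)]" for i
    using generator bij unfolding g_def by (metis bij_betw_def f_inv_into_f)
  have g_inv: "hom_ext g w = inv_into (FN N) \<phi> w" if w: "w \<in> FN N" for w
  proof -
    have "\<phi> (hom_ext g w) = hom_ext (\<lambda>i. \<phi> (g i)) w"
      using f by (simp add: hom_ext_hom_ext)
    also have "\<dots> = hom_ext (\<lambda>i. [(i, False)]) w"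
      by (rule hom_ext_cong) (use w \<phi>_g in \<open>auto simp: FN_def\<close>)
    also have "\<dots> = w"
      using w by (simp add: hom_ext_basis reduce_reduced FN_def)
    finally show ?thesis
      using inv_into_f_eq[OF inj] hom_ext_in_FN[OF g_in_FN w] by metis
  qed
  have "bij_betw (hom_ext g) (FN N) (FN N)"
    using bij_betw_cong[of "FN N" "hom_ext g" "inv_into (FN N) \<phi>"] g_inv bij_betw_inv_into[OF bij]
    by blast
  then have "hom_ext g \<in> Aut N"
    using g_in_FN unfolding Aut_def by blast
  moreover have "\<forall>w \<in> FN N. hom_ext g (\<phi> w) = w"
    using g_inv bij inj by (metis bij_betwE inv_into_f_f)
  ultimately show ?thesis by blast
qed

lemma orbit_classes_related:
  assumes "D \<subseteq> FN N" and "C \<in> orbit N D" and "C' \<in> orbit N D"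
  shows "\<exists>\<phi> \<in> Aut N. act \<phi> C = C'"
proof -
  obtain \<phi> where \<phi>: "\<phi> \<in> Aut N" "C = \<phi> ` D"
    using assms(2) by (auto simp: orbit_def act_def)
  obtain \<phi>' where \<phi>': "\<phi>' \<in> Aut N" "C' = \<phi>' ` D"
    using assms(3) by (auto simp: orbit_def act_def)
  obtain \<psi> where \<psi>: "\<psi> \<in> Aut N" "\<forall>w \<in> FN N. \<psi> (\<phi> w) = w"
    using Aut_left_inverse[OF \<phi>(1)] by blast
  have "act (\<phi>' \<circ> \<psi>) C = (\<lambda>d. \<phi>' (\<psi> (\<phi> d))) ` D"
    using \<phi>(2) by (simp add: act_def image_image)
  also have "\<dots> = \<phi>' ` D"
    by (rule image_cong) (use \<psi>(2) assms(1) in auto)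
  finally have "act (\<phi>' \<circ> \<psi>) C = C'"
    using \<phi>'(2) by simp
  then show ?thesis using comp_in_Aut[OF \<phi>'(1) \<psi>(1)] by blast
qed

lemma minimizing_contains_shorter_image:
  assumes S: "minimizing N M lam eps S" and "lam > 1" and "C \<in> S" and "\<phi> \<in> Aut N"
    and shorter: "cl_len (act \<phi> C) \<le> cl_len C"
  shows "act \<phi> C \<in> S"
proof (rule ccontr)
  assume "act \<phi> C \<notin> S"
  then have "lam \<le> real (cl_len (act \<phi> C)) / real (cl_len C)"
    using S \<open>C \<in> S\<close> \<open>\<phi> \<in> Aut N\<close> unfolding minimizing_def by blast
  moreover have "real (cl_len (act \<phi> C)) / real (cl_len C) \<le> 1"
    using shorter by (cases "cl_len C = 0") (auto simp: divide_le_eq)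
  ultimately show False using \<open>lam > 1\<close> by linarith
qed

theorem mainTheorem4:
  fixes N M :: nat and lam eps :: real and u :: word
  assumes "N \<ge> 2" and "M \<ge> 1" and "lam > 1" and "0 \<le> eps" and "eps < lam - 1"
    and "u \<in> FN N" and "u \<noteq> []"
    and "\<exists>C \<in> orbit N (conjcl N u). is_minimal N M lam eps C"
  shows "\<forall>C' \<in> min_set N (conjcl N u). is_minimal N M lam eps C'"
proof
  fix C' assume "C' \<in> min_set N (conjcl N u)"
  then have C'_orbit: "C' \<in> orbit N (conjcl N u)" and "out_minimal N C'"
    by (auto simp: min_set_def)
  obtain C S where C_orbit: "C \<in> orbit N (conjcl N u)"
    and S: "minimizing N M lam eps S" "C \<in> S"
    using assms(8) by (auto simp: is_minimal_def)
  have D: "conjcl N u \<subseteq> FN N"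
    using conjcl_subset_FN[OF assms(6)] .
  obtain \<phi> where "\<phi> \<in> Aut N" "act \<phi> C' = C"
    using orbit_classes_related[OF D C'_orbit C_orbit] by blast
  then have "cl_len C' \<le> cl_len C"
    using \<open>out_minimal N C'\<close> unfolding out_minimal_def by blast
  moreover obtain \<psi> where "\<psi> \<in> Aut N" "act \<psi> C = C'"
    using orbit_classes_related[OF D C_orbit C'_orbit] by blast
  ultimately have "C' \<in> S"
    using minimizing_contains_shorter_image[OF S(1) assms(3) S(2)] by blast
  then show "is_minimal N M lam eps C'"
    using S(1) by (auto simp: is_minimal_def minimizing_def)
qed

end
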